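(* Let $\mathcal V$ be an operator space and $\mathcal D'\subseteq\mathcal D$ an inclusion of noncommutative domains in $\mathcal V_{\rm nc}$ ($\mathcal D'_n\subseteq\mathcal D_n$ for all $n$). Assume (1) $M:=\sup_{n\in\mathbb N}\sup_{x\in\mathcal D'_n}\|x\|<+\infty$ and (2) $m:=\inf_{n\in\mathbb N}\inf\{\|x-w\|\colon x\in\mathcal D'_n,\ w\in\mathcal V^{n\times n}\setminus\mathcal D_n\}>0$. Then there exists a constant $k\in[0,1)$ such that $k\,\tilde\delta_{\mathcal D'}(a,c)\ge\tilde\delta_{\mathcal D}(a,c)$ for all $n$ and all $a,c\in\mathcal D'_n$.
   Context: A noncommutative domain is a family $\mathcal D=(\mathcal D_n)$ of open sets $\mathcal D_n\subseteq\mathcal V^{n\times n}$ (with the operator-space norms) closed under direct sums. For $a\in\mathcal D_n,c\in\mathcal D_m,b\in\mathcal V^{n\times m}$, $\delta_{\mathcal D}(a,c)(b)=\big[\sup\{t\in[0,+\infty]\colon\begin{bmatrix}a&sb\\0&c\end{bmatrix}\in\mathcal D_{n+m}\ \forall s\in[0,t]\}\big]^{-1}$ ($1/0=+\infty,1/\infty=0$), and $\tilde\delta_{\mathcal D}(a,c)=\delta_{\mathcal D}(a,c)(a-c)$ for $a,c\in\mathcal D_n$. *)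

theory Defs
  imports "HOL-Analysis.Analysis"
begin

text \<open>Matrices over a complex vector space V are represented as functions
  nat => nat => V; the n x m matrices are those vanishing outside the
  index range {0..<n} x {0..<m}.\<close>

type_synonym 'v vmat = "nat \<Rightarrow> nat \<Rightarrow> 'v"

definition vmats :: "nat \<Rightarrow> nat \<Rightarrow> ('v::zero) vmat set" where
  "vmats n m = {x. \<forall>i j. (n \<le> i \<or> m \<le> j) \<longrightarrow> x i j = 0}"

text \<open>Isabelle's distribution has no class of complex vector spaces; a complex
  vector space is represented as a real vector space 'v with a complex structure J
  (an R-linear map with J (J v) = -v), the complex scalar action being
  c * v = Re c v + Im c J v.\<close>
definition complex_structure :: "('v::real_vector \<Rightarrow> 'v) \<Rightarrow> bool" where
  "complex_structure J \<longleftrightarrow> linear J \<and> (\<forall>v. J (J v) = - v)"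

definition cscale :: "('v::real_vector \<Rightarrow> 'v) \<Rightarrow> complex \<Rightarrow> 'v \<Rightarrow> 'v" where
  "cscale J c v = Re c *\<^sub>R v + Im c *\<^sub>R J v"

definition cmat_norm :: "nat \<Rightarrow> (nat \<Rightarrow> nat \<Rightarrow> complex) \<Rightarrow> real" where
  "cmat_norm n \<alpha> = Sup {sqrt (\<Sum>i<n. (cmod (\<Sum>j<n. \<alpha> i j * v j))\<^sup>2) | v.
                         (\<Sum>j<n. (cmod (v j))\<^sup>2) \<le> 1}"

definition cmul :: "('v \<Rightarrow> 'v) \<Rightarrow> nat \<Rightarrow> (nat \<Rightarrow> nat \<Rightarrow> complex) \<Rightarrow> ('v::real_vector) vmat
                     \<Rightarrow> (nat \<Rightarrow> nat \<Rightarrow> complex) \<Rightarrow> 'v vmat" where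
  "cmul J n \<alpha> x \<beta> = (\<lambda>i j. if i < n \<and> j < n
      then (\<Sum>k<n. \<Sum>l<n. cscale J (\<alpha> i k * \<beta> l j) (x k l)) else 0)"

definition blk :: "nat \<Rightarrow> nat \<Rightarrow> ('v::zero) vmat \<Rightarrow> 'v vmat \<Rightarrow> 'v vmat \<Rightarrow> 'v vmat" where
  "blk n m a b c = (\<lambda>i j.
      if i < n \<and> j < n then a i j
      else if i < n \<and> n \<le> j \<and> j < n + m then b i (j - n)
      else if n \<le> i \<and> i < n + m \<and> n \<le> j \<and> j < n + m then c (i - n) (j - n)
      else 0)"

definition dsum :: "nat \<Rightarrow> nat \<Rightarrow> ('v::zero) vmat \<Rightarrow> 'v vmat \<Rightarrow> 'v vmat" where
  "dsum n m x y = blk n m x (\<lambda>_ _. 0) y"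

definition operator_space :: "('v::real_vector \<Rightarrow> 'v) \<Rightarrow> (nat \<Rightarrow> ('v::real_vector) vmat \<Rightarrow> real) \<Rightarrow> bool" where
  "operator_space J nm \<longleftrightarrow>
     complex_structure J \<and>
     (\<forall>n\<ge>1. \<forall>x\<in>vmats n n. \<forall>y\<in>vmats n n. \<forall>c::complex.
        0 \<le> nm n x \<and> (nm n x = 0 \<longleftrightarrow> x = (\<lambda>_ _. 0))
        \<and> nm n (\<lambda>i j. x i j + y i j) \<le> nm n x + nm n y
        \<and> nm n (\<lambda>i j. cscale J c (x i j)) = cmod c * nm n x)
   \<and> (\<forall>n\<ge>1. \<forall>x\<in>vmats n n. \<forall>\<alpha> \<beta>.
        nm n (cmul J n \<alpha> x \<beta>) \<le> cmat_norm n \<alpha> * nm n x * cmat_norm n \<beta>)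
   \<and> (\<forall>n\<ge>1. \<forall>m\<ge>1. \<forall>x\<in>vmats n n. \<forall>y\<in>vmats m m.
        nm (n + m) (dsum n m x y) = max (nm n x) (nm m y))"

definition nc_domain :: "(nat \<Rightarrow> ('v::real_vector) vmat \<Rightarrow> real) \<Rightarrow> (nat \<Rightarrow> 'v vmat set) \<Rightarrow> bool" where
  "nc_domain nm D \<longleftrightarrow>
     (\<forall>n\<ge>1. D n \<subseteq> vmats n n \<and>
        (\<forall>x\<in>D n. \<exists>e>0. \<forall>y\<in>vmats n n. nm n (\<lambda>i j. y i j - x i j) < e \<longrightarrow> y \<in> D n))
   \<and> (\<forall>n\<ge>1. \<forall>m\<ge>1. \<forall>x\<in>D n. \<forall>y\<in>D m. dsum n m x y \<in> D (n + m))"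

definition nc_delta :: "(nat \<Rightarrow> ('v::real_vector) vmat set) \<Rightarrow> nat \<Rightarrow> nat
                         \<Rightarrow> 'v vmat \<Rightarrow> 'v vmat \<Rightarrow> 'v vmat \<Rightarrow> ereal" where
  "nc_delta D n m a c b =
     (let S = Sup {t::ereal. 0 \<le> t \<and>
                 (\<forall>s::real. 0 \<le> s \<and> ereal s \<le> t \<longrightarrow>
                    blk n m a (\<lambda>i j. s *\<^sub>R b i j) c \<in> D (n + m))}
      in if S = 0 then \<infinity> else if S = \<infinity> then 0 else ereal (1 / real_of_ereal S))"

definition nc_delta_tilde :: "(nat \<Rightarrow> ('v::real_vector) vmat set) \<Rightarrow> nat
                               \<Rightarrow> 'v vmat \<Rightarrow> 'v vmat \<Rightarrow> ereal" where
  "nc_delta_tilde D n a c = nc_delta D n n a c (\<lambda>i j. a i j - c i j)"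

end

(* Along the ray s |-> [a, s b; 0, c] distances are |t - s| times beta, the norm of [0, b; 0, 0].
   The ray stays in D' up to the parameter sigma = 1 / delta_D'(a,c)(b); as D' has diameter at
   most 2M, sigma beta <= 2M.  A point of the ray outside D is at distance at least mu from the
   points of D', so the ray stays in D up to sigma + mu / beta >= sigma (2M + mu) / (2M).
   Hence delta_D <= k delta_D' with k = 2M / (2M + mu), for every off-diagonal b, and the
   theorem is the case b = a - c. *)
theory Submission
  imports Defs
begin

definition exit_time :: "real set \<Rightarrow> ereal" where
  "exit_time S = Sup {t::ereal. 0 \<le> t \<and> (\<forall>s::real. 0 \<le> s \<and> ereal s \<le> t \<longrightarrow> s \<in> S)}"

lemma nc_delta_eq_inverse_exit_time:
  "nc_delta D n m a c b =
     inverse (exit_time {s. blk n m a (\<lambda>i j. s *\<^sub>R b i j) c \<in> D (n + m)})"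
proof -
  have "(if x = 0 then \<infinity> else if x = \<infinity> then 0 else ereal (1 / real_of_ereal x)) = inverse x"
    for x :: ereal
    by (cases x) (auto simp: inverse_eq_divide)
  then show ?thesis
    unfolding nc_delta_def exit_time_def Let_def by simp
qed

lemma exit_time_mono: "S \<subseteq> T \<Longrightarrow> exit_time S \<le> exit_time T"
  unfolding exit_time_def by (rule Sup_subset_mono) blast

lemma mem_if_less_exit_time:
  assumes "0 \<le> s" and "ereal s < exit_time S"
  shows "s \<in> S"
proof -
  obtain t where "ereal s < t" "\<forall>r. 0 \<le> r \<and> ereal r \<le> t \<longrightarrow> r \<in> S"
    using assms(2) unfolding exit_time_def by (auto simp: less_Sup_iff)
  then show ?thesis using assms(1) by auto
qed

lemma exit_time_geI:
  assumes "0 < t" and "\<And>s. 0 \<le> s \<Longrightarrow> s < t \<Longrightarrow> s \<in> S"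
  shows "ereal t \<le> exit_time S"
proof (rule dense_le_bounded)
  show "ereal 0 < ereal t" using assms(1) by simp
  fix w assume "ereal 0 < w" "w < ereal t"
  then obtain r where "w = ereal r" "0 < r" "r < t" by (cases w) auto
  then show "w \<le> exit_time S"
    unfolding exit_time_def using assms(2) by (intro Sup_upper) auto
qed

lemma mult_le_of_forall_less:
  fixes \<sigma> \<beta> C :: real
  assumes "0 < \<sigma>" and le: "\<And>r. 0 \<le> r \<Longrightarrow> r < \<sigma> \<Longrightarrow> r * \<beta> \<le> C"
  shows "\<sigma> * \<beta> \<le> C"
proof (cases "\<beta> \<le> 0")
  case True
  then have "\<sigma> * \<beta> \<le> 0" using assms(1) by (simp add: mult_nonneg_nonpos)
  then show ?thesis using le[of 0] assms(1) by simp
next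
  case False
  have "\<sigma> \<le> C / \<beta>"
    by (rule dense_le_bounded[OF assms(1)]) (use False le in \<open>simp add: pos_le_divide_eq\<close>)
  then show ?thesis using False by (simp add: pos_le_divide_eq)
qed

lemma exit_time_extension:
  fixes \<sigma> \<beta> \<mu> t :: real
  assumes "S' \<subseteq> S" and \<sigma>: "exit_time S' = ereal \<sigma>" "0 < \<sigma>"
    and "0 < \<mu>" and "\<sigma> \<le> t" and "(t - \<sigma>) * \<beta> \<le> \<mu>"
    and gap: "\<And>r s. 0 \<le> r \<Longrightarrow> r < \<sigma> \<Longrightarrow> 0 \<le> s \<Longrightarrow> s \<notin> S \<Longrightarrow> \<mu> \<le> \<bar>s - r\<bar> * \<beta>"
  shows "ereal t \<le> exit_time S"
proof (rule exit_time_geI)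
  show "0 < t" using assms by linarith
  fix s assume s: "0 \<le> s" "s < t"
  show "s \<in> S"
  proof (cases "s < \<sigma>")
    case True
    then show ?thesis using mem_if_less_exit_time[OF s(1)] \<sigma> \<open>S' \<subseteq> S\<close> by auto
  next
    case False
    show ?thesis
    proof (rule ccontr)
      assume "s \<notin> S"
      then have gap_s: "\<mu> \<le> (s - r) * \<beta>" if "0 \<le> r" "r < \<sigma>" for r
        using gap[OF that s(1)] that False by simp
      have "0 < s * \<beta>" using gap_s[of 0] \<open>0 < \<mu>\<close> \<open>0 < \<sigma>\<close> by simp
      then have "\<beta> > 0" using s(1) by (simp add: zero_less_mult_iff)
      have "\<sigma> * \<beta> \<le> s * \<beta> - \<mu>"
        using gap_s by (intro mult_le_of_forall_less[OF \<open>0 < \<sigma>\<close>]) (simp add: algebra_simps)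
      moreover have "(s - \<sigma>) * \<beta> < (t - \<sigma>) * \<beta>"
        using \<open>\<beta> > 0\<close> s by simp
      ultimately show False using assms(6) by (simp add: algebra_simps)
    qed
  qed
qed

lemma inverse_exit_time_le_scaled:
  fixes M \<mu> \<beta> :: real
  assumes "S' \<subseteq> S" and "0 < exit_time S'" and "0 < M" and "0 < \<mu>"
    and bound: "\<And>r. 0 \<le> r \<Longrightarrow> ereal r < exit_time S' \<Longrightarrow> r * \<beta> \<le> 2 * M"
    and gap: "\<And>r s. 0 \<le> r \<Longrightarrow> ereal r < exit_time S' \<Longrightarrow> 0 \<le> s \<Longrightarrow> s \<notin> S
                \<Longrightarrow> \<mu> \<le> \<bar>s - r\<bar> * \<beta>"
  shows "inverse (exit_time S) \<le> ereal (2 * M / (2 * M + \<mu>)) * inverse (exit_time S')"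
proof (cases "exit_time S' = \<infinity>")
  case True
  then have "exit_time S = \<infinity>" using exit_time_mono[OF \<open>S' \<subseteq> S\<close>] by simp
  with True show ?thesis by simp
next
  case False
  then obtain \<sigma> where \<sigma>: "exit_time S' = ereal \<sigma>" and "0 < \<sigma>"
    using \<open>0 < exit_time S'\<close> by (cases "exit_time S'") auto
  define T where "T = \<sigma> + \<sigma> * \<mu> / (2 * M)"
  have "\<sigma> * \<beta> \<le> 2 * M"
    using bound \<sigma> by (intro mult_le_of_forall_less[OF \<open>0 < \<sigma>\<close>]) simp
  then have "(T - \<sigma>) * \<beta> \<le> \<mu>"
    unfolding T_def using \<open>0 < M\<close> \<open>0 < \<mu>\<close> by (simp add: field_simps)
  moreover have "\<sigma> \<le> T"
    unfolding T_def using \<open>0 < \<sigma>\<close> \<open>0 < M\<close> \<open>0 < \<mu>\<close> by simp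
  ultimately have "ereal T \<le> exit_time S"
    using gap \<sigma> by (intro exit_time_extension[OF \<open>S' \<subseteq> S\<close> \<sigma> \<open>0 < \<sigma>\<close> \<open>0 < \<mu>\<close>]) auto
  then have "inverse (exit_time S) \<le> ereal (1 / T)"
    using ereal_inverse_antimono[of "ereal T"] \<open>0 < \<sigma>\<close> \<open>\<sigma> \<le> T\<close>
    by (simp add: inverse_eq_divide)
  also have "1 / T = 2 * M / (2 * M + \<mu>) * (1 / \<sigma>)"
    unfolding T_def using \<open>0 < \<sigma>\<close> \<open>0 < M\<close> \<open>0 < \<mu>\<close> by (simp add: field_simps)
  finally show ?thesis
    using \<sigma> \<open>0 < \<sigma>\<close> by (simp add: inverse_eq_divide)
qed

lemma os_norm_nonneg:
  assumes "operator_space J nm" and "n \<ge> 1" and "x \<in> vmats n n"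
  shows "0 \<le> nm n x"
  using assms unfolding operator_space_def by blast

lemma os_norm_scaleR:
  assumes "operator_space J nm" and "n \<ge> 1" and "x \<in> vmats n n"
  shows "nm n (\<lambda>i j. r *\<^sub>R x i j) = \<bar>r\<bar> * nm n x"
proof -
  have "nm n (\<lambda>i j. cscale J (complex_of_real r) (x i j)) = cmod (complex_of_real r) * nm n x"
    using assms unfolding operator_space_def by blast
  then show ?thesis by (simp add: cscale_def)
qed

lemma os_norm_diff_le:
  assumes op: "operator_space J nm" and n: "n \<ge> 1" and x: "x \<in> vmats n n" and y: "y \<in> vmats n n"
  shows "nm n (\<lambda>i j. x i j - y i j) \<le> nm n x + nm n y"
proof -
  define z where "z = (\<lambda>i j. (-1) *\<^sub>R y i j)"
  have z: "z \<in> vmats n n" using y by (simp add: vmats_def z_def)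
  have "nm n (\<lambda>i j. x i j + z i j) \<le> nm n x + nm n z"
    using op n x z unfolding operator_space_def by blast
  moreover have "nm n z = nm n y" using os_norm_scaleR[OF op n y, of "-1"] by (simp add: z_def)
  ultimately show ?thesis by (simp add: z_def)
qed

lemma blk_in_vmats: "blk n m a b c \<in> vmats (n + m) (n + m)"
  unfolding blk_def vmats_def by auto

lemma os_norm_blk_ray_diff:
  assumes "operator_space J nm" and "n + m \<ge> 1"
  shows "nm (n + m) (\<lambda>i j. blk n m a (\<lambda>i j. t *\<^sub>R b i j) c i j - blk n m a (\<lambda>i j. s *\<^sub>R b i j) c i j)
         = \<bar>t - s\<bar> * nm (n + m) (blk n m (\<lambda>_ _. 0) b (\<lambda>_ _. 0))"
proof -
  have "(\<lambda>i j. blk n m a (\<lambda>i j. t *\<^sub>R b i j) c i j - blk n m a (\<lambda>i j. s *\<^sub>R b i j) c i j)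
        = (\<lambda>i j. (t - s) *\<^sub>R blk n m (\<lambda>_ _. 0) b (\<lambda>_ _. 0) i j)"
    unfolding blk_def by (auto simp: fun_eq_iff scaleR_diff_left)
  then show ?thesis using os_norm_scaleR[OF assms blk_in_vmats] by simp
qed

lemma nc_domain_blk_zero:
  assumes "nc_domain nm D" and "n \<ge> 1" "m \<ge> 1" and "a \<in> D n" and "c \<in> D m"
  shows "blk n m a (\<lambda>i j. 0 *\<^sub>R b i j) c \<in> D (n + m)"
proof -
  have "blk n m a (\<lambda>i j. 0 *\<^sub>R b i j) c = dsum n m a c" unfolding dsum_def by simp
  then show ?thesis using assms unfolding nc_domain_def by simp
qed

lemma exit_time_nc_domain_pos:
  assumes op: "operator_space J nm" and D: "nc_domain nm D"
    and "n \<ge> 1" "m \<ge> 1" and "a \<in> D n" and "c \<in> D m"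
  shows "0 < exit_time {s. blk n m a (\<lambda>i j. s *\<^sub>R b i j) c \<in> D (n + m)}"
proof -
  define P where "P s = blk n m a (\<lambda>i j. s *\<^sub>R b i j) c" for s :: real
  define \<beta> where "\<beta> = nm (n + m) (blk n m (\<lambda>_ _. 0) b (\<lambda>_ _. 0))"
  have "n + m \<ge> 1" using \<open>n \<ge> 1\<close> by simp
  have "P 0 \<in> D (n + m)" unfolding P_def by (rule nc_domain_blk_zero[OF D assms(3-6)])
  then obtain \<epsilon> where "0 < \<epsilon>"
    and \<epsilon>: "\<forall>y\<in>vmats (n + m) (n + m). nm (n + m) (\<lambda>i j. y i j - P 0 i j) < \<epsilon> \<longrightarrow> y \<in> D (n + m)"
    using D \<open>n + m \<ge> 1\<close> unfolding nc_domain_def by meson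
  have "0 \<le> \<beta>" unfolding \<beta>_def using os_norm_nonneg[OF op \<open>n + m \<ge> 1\<close> blk_in_vmats] .
  define e where "e = \<epsilon> / (\<beta> + 1)"
  have "0 < e" unfolding e_def using \<open>0 < \<epsilon>\<close> \<open>0 \<le> \<beta>\<close> by simp
  have "P s \<in> D (n + m)" if "0 \<le> s" "s < e" for s
  proof -
    have "nm (n + m) (\<lambda>i j. P s i j - P 0 i j) = s * \<beta>"
      unfolding P_def \<beta>_def using os_norm_blk_ray_diff[OF op \<open>n + m \<ge> 1\<close>, of a s b c 0] that(1)
      by simp
    also have "\<dots> \<le> e * \<beta>" using that \<open>0 \<le> \<beta>\<close> by (simp add: mult_right_mono)
    also have "\<dots> < \<epsilon>" unfolding e_def using \<open>0 < \<epsilon>\<close> \<open>0 \<le> \<beta>\<close> by (simp add: field_simps)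
    finally show ?thesis using \<epsilon> unfolding P_def by (simp add: blk_in_vmats)
  qed
  then have "ereal e \<le> exit_time {s. P s \<in> D (n + m)}"
    using \<open>0 < e\<close> by (intro exit_time_geI) auto
  moreover have "0 < ereal e" using \<open>0 < e\<close> by simp
  ultimately show ?thesis unfolding P_def by (meson order.strict_trans2)
qed

lemma nc_delta_le_scaled:
  assumes op: "operator_space J nm" and D': "nc_domain nm D'"
    and "n \<ge> 1" "m \<ge> 1" and "a \<in> D' n" and "c \<in> D' m"
    and sub: "D' (n + m) \<subseteq> D (n + m)"
    and bounded: "\<forall>x\<in>D' (n + m). nm (n + m) x \<le> M" and "0 < M"
    and "0 < \<mu>"
    and apart: "\<forall>x\<in>D' (n + m). \<forall>w\<in>vmats (n + m) (n + m) - D (n + m).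
                  \<mu> \<le> nm (n + m) (\<lambda>i j. x i j - w i j)"
  shows "nc_delta D n m a c b \<le> ereal (2 * M / (2 * M + \<mu>)) * nc_delta D' n m a c b"
proof -
  define P where "P s = blk n m a (\<lambda>i j. s *\<^sub>R b i j) c" for s :: real
  define \<beta> where "\<beta> = nm (n + m) (blk n m (\<lambda>_ _. 0) b (\<lambda>_ _. 0))"
  define S' where "S' = {s. P s \<in> D' (n + m)}"
  have "n + m \<ge> 1" using \<open>n \<ge> 1\<close> by simp
  have dist: "nm (n + m) (\<lambda>i j. P t i j - P s i j) = \<bar>t - s\<bar> * \<beta>" for s t
    unfolding P_def \<beta>_def by (rule os_norm_blk_ray_diff[OF op \<open>n + m \<ge> 1\<close>])
  have "P 0 \<in> D' (n + m)" unfolding P_def by (rule nc_domain_blk_zero[OF D' assms(3-6)])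
  have bound: "r * \<beta> \<le> 2 * M" if "0 \<le> r" "ereal r < exit_time S'" for r
  proof -
    have "P r \<in> D' (n + m)" using mem_if_less_exit_time[OF that] unfolding S'_def by simp
    have "r * \<beta> = nm (n + m) (\<lambda>i j. P r i j - P 0 i j)" using dist[of r 0] that(1) by simp
    also have "\<dots> \<le> nm (n + m) (P r) + nm (n + m) (P 0)"
      unfolding P_def by (rule os_norm_diff_le[OF op \<open>n + m \<ge> 1\<close> blk_in_vmats blk_in_vmats])
    also have "\<dots> \<le> M + M"
      using bounded \<open>P r \<in> D' (n + m)\<close> \<open>P 0 \<in> D' (n + m)\<close> by (intro add_mono) auto
    finally show ?thesis by simp
  qed
  have gap: "\<mu> \<le> \<bar>s - r\<bar> * \<beta>"
    if "0 \<le> r" "ereal r < exit_time S'" "0 \<le> s" "s \<notin> {s. P s \<in> D (n + m)}" for r s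
  proof -
    have "P r \<in> D' (n + m)" using mem_if_less_exit_time[OF that(1,2)] unfolding S'_def by simp
    then have "\<mu> \<le> nm (n + m) (\<lambda>i j. P r i j - P s i j)"
      using apart that(4) unfolding P_def by (simp add: blk_in_vmats)
    then show ?thesis by (simp add: dist abs_minus_commute)
  qed
  have S'_sub: "S' \<subseteq> {s. P s \<in> D (n + m)}" unfolding S'_def using sub by blast
  have "0 < exit_time S'"
    unfolding S'_def P_def by (rule exit_time_nc_domain_pos[OF op D' assms(3-6)])
  from inverse_exit_time_le_scaled[OF S'_sub \<open>0 < exit_time S'\<close> \<open>0 < M\<close> \<open>0 < \<mu>\<close> bound gap]
  show ?thesis unfolding nc_delta_eq_inverse_exit_time S'_def P_def .
qed

theorem proposition5p3:
  fixes J :: "'v::real_vector \<Rightarrow> 'v"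
    and nm :: "nat \<Rightarrow> 'v vmat \<Rightarrow> real"
    and D D' :: "nat \<Rightarrow> 'v vmat set"
  assumes "operator_space J nm"
    and "nc_domain nm D" and "nc_domain nm D'"
    and "\<forall>n\<ge>1. D' n \<subseteq> D n"
    and "\<exists>M. \<forall>n\<ge>1. \<forall>x\<in>D' n. nm n x \<le> M"
    and "\<exists>\<mu>>0. \<forall>n\<ge>1. \<forall>x\<in>D' n. \<forall>w\<in>vmats n n - D n. \<mu> \<le> nm n (\<lambda>i j. x i j - w i j)"
  shows "\<exists>k::real. 0 \<le> k \<and> k < 1 \<and>
           (\<forall>n\<ge>1. \<forall>a\<in>D' n. \<forall>c\<in>D' n.
              ereal k * nc_delta_tilde D' n a c \<ge> nc_delta_tilde D n a c)"
proof -
  obtain M0 where M0: "\<forall>n\<ge>1. \<forall>x\<in>D' n. nm n x \<le> M0" using assms(5) by blast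
  define M where "M = max M0 1"
  have M: "\<forall>n\<ge>1. \<forall>x\<in>D' n. nm n x \<le> M" using M0 unfolding M_def by force
  obtain \<mu> where "0 < \<mu>" and \<mu>: "\<forall>n\<ge>1. \<forall>x\<in>D' n. \<forall>w\<in>vmats n n - D n. \<mu> \<le> nm n (\<lambda>i j. x i j - w i j)"
    using assms(6) by blast
  have "0 < M" unfolding M_def by simp
  show ?thesis
  proof (intro exI[of _ "2 * M / (2 * M + \<mu>)"] conjI allI impI ballI)
    show "0 \<le> 2 * M / (2 * M + \<mu>)" and "2 * M / (2 * M + \<mu>) < 1"
      using \<open>0 < M\<close> \<open>0 < \<mu>\<close> by simp_all
    fix n a c assume "n \<ge> 1" "a \<in> D' n" "c \<in> D' n"
    then show "nc_delta_tilde D n a c \<le> ereal (2 * M / (2 * M + \<mu>)) * nc_delta_tilde D' n a c"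
      unfolding nc_delta_tilde_def
      using assms(4) M \<mu> by (intro nc_delta_le_scaled[OF assms(1,3) \<open>n \<ge> 1\<close> \<open>n \<ge> 1\<close>
          \<open>a \<in> D' n\<close> \<open>c \<in> D' n\<close> _ _ \<open>0 < M\<close> \<open>0 < \<mu>\<close>]) simp_all
  qed
qed

end
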